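(* Let $z\in\mathcal N_h^I$ and let $\varphi$ be a quadratic polynomial on $\mathbb R^d$. If $\varphi$ has no strict local maximum in $B_\varepsilon(z)$, then $$-\Delta^\diamond_{\infty,\mathfrak h}\varphi(z)\ge-\lambda_{\max}(D^2\varphi)-C\Big(\frac{h^2}{\varepsilon^2}+\theta^2\Big),$$ where $C$ depends on $d$, $D^2\varphi$, and the shape regularity constant of $\mathcal T_h$.
   Context: Setting: $\Omega\subset\mathbb R^d$ ($d\ge1$) is a bounded domain with continuous boundary. For $r>0$, $\Omega^{(r)}=\{x\in\Omega:\operatorname{dist}(x,\partial\Omega)>r\}$. $\mathcal T_h$ is a shape-regular mesh of closed simplices, $h=\max_T\operatorname{diam}T$, $\Omega_h$ the interior of the union of the simplices, with $\Omega^{(h)}\subset\Omega_h\subset\Omega$; $\mathcal N_h$ the set of vertices. $\mathcal I_h$ is the Lagrange interpolant onto continuous piecewise linear functions on $\mathcal T_h$. Parameters $\mathfrak h=(h,\varepsilon,\theta)$, $\varepsilon\in[h,\operatorname{diam}\Omega]$, $0<\theta\le1$. $\mathcal N_h^I=\mathcal N_h\cap\Omega^{(2\varepsilon)}$. $\mathbb S_\theta$: finite symmetric subset of the unit sphere $\mathbb S$ such that each $v\in\mathbb S$ has $v_\theta\in\mathbb S_\theta$ with $|v-v_\theta|\le\theta$. For $z\in\mathcal N_h^I$: $\mathcal N_{\mathfrak h}(z)=\{z\}\cup\{z+\varepsilon v_\theta:v_\theta\in\mathbb S_\theta\}$, and for $w\in C(\overline\Omega)$, $-\Delta^\diamond_{\infty,\mathfrak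 h}w(z)=\varepsilon^{-2}\big(2w(z)-\max_{x\in\mathcal N_{\mathfrak h}(z)}\mathcal I_hw(x)-\min_{x\in\mathcal N_{\mathfrak h}(z)}\mathcal I_hw(x)\big)$. $B_\varepsilon(z)$ is the open Euclidean ball; $\lambda_{\max}$ is the largest eigenvalue. *)

theory Defs
  imports "HOL-Analysis.Analysis"
begin

definition continuous_boundary :: "'a::euclidean_space set \<Rightarrow> bool" where
  "continuous_boundary \<Omega> \<longleftrightarrow>
     (\<forall>p\<in>frontier \<Omega>. \<exists>r>0. \<exists>e. norm e = 1 \<and>
        (\<exists>g :: 'a \<Rightarrow> real. continuous_on {y. y \<bullet> e = 0} g \<and>
           (\<forall>x\<in>ball p r. x \<in> \<Omega> \<longleftrightarrow> x \<bullet> e > g (x - (x \<bullet> e) *\<^sub>R e))))"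

definition admissible_domain :: "'a::euclidean_space set \<Rightarrow> bool" where
  "admissible_domain \<Omega> \<longleftrightarrow> open \<Omega> \<and> connected \<Omega> \<and> \<Omega> \<noteq> {} \<and> bounded \<Omega>
     \<and> continuous_boundary \<Omega>"

definition inner_set :: "'a::euclidean_space set \<Rightarrow> real \<Rightarrow> 'a set" where
  "inner_set \<Omega> r = {x\<in>\<Omega>. infdist x (frontier \<Omega>) > r}"

definition vertices :: "'a::euclidean_space set \<Rightarrow> 'a set" where
  "vertices T = {v. v extreme_point_of T}"

definition is_mesh :: "'a::euclidean_space set set \<Rightarrow> bool" where
  "is_mesh Th \<longleftrightarrow> finite Th \<and> Th \<noteq> {} \<and> (\<forall>T\<in>Th. int DIM('a) simplex T) \<and>
     (\<forall>T1\<in>Th. \<forall>T2\<in>Th. T1 \<inter> T2 = convex hull (vertices T1 \<inter> vertices T2))"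

definition inradius :: "'a::euclidean_space set \<Rightarrow> real" where
  "inradius T = Sup {r. \<exists>x. ball x r \<subseteq> T}"

definition shape_regular :: "real \<Rightarrow> 'a::euclidean_space set set \<Rightarrow> bool" where
  "shape_regular \<sigma> Th \<longleftrightarrow> (\<forall>T\<in>Th. diameter T \<le> \<sigma> * inradius T)"

definition mesh_size :: "'a::euclidean_space set set \<Rightarrow> real" where
  "mesh_size Th = Max (diameter ` Th)"

definition mesh_domain :: "'a::euclidean_space set set \<Rightarrow> 'a set" where
  "mesh_domain Th = interior (\<Union>Th)"

definition mesh_nodes :: "'a::euclidean_space set set \<Rightarrow> 'a set" where
  "mesh_nodes Th = (\<Union>T\<in>Th. vertices T)"

definition bary_coords :: "'a::euclidean_space set \<Rightarrow> 'a \<Rightarrow> ('a \<Rightarrow> real) \<Rightarrow> bool" where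
  "bary_coords V x c \<longleftrightarrow> (\<forall>v\<in>V. c v \<ge> 0) \<and> sum c V = 1 \<and> (\<Sum>v\<in>V. c v *\<^sub>R v) = x"

definition lagrange_interp :: "'a::euclidean_space set set \<Rightarrow> ('a \<Rightarrow> real) \<Rightarrow> 'a \<Rightarrow> real" where
  "lagrange_interp Th w x = (THE y. \<exists>T\<in>Th. x \<in> T \<and>
      (\<exists>c. bary_coords (vertices T) x c \<and> y = (\<Sum>v\<in>vertices T. c v * w v)))"

definition direction_set :: "real \<Rightarrow> 'a::euclidean_space set \<Rightarrow> bool" where
  "direction_set \<theta> S \<longleftrightarrow> finite S \<and> S \<subseteq> sphere 0 1 \<and> (\<forall>v\<in>S. - v \<in> S) \<and>
     (\<forall>v. norm v = 1 \<longrightarrow> (\<exists>u\<in>S. norm (v - u) \<le> \<theta>))"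

definition stencil :: "real \<Rightarrow> 'a::euclidean_space set \<Rightarrow> 'a \<Rightarrow> 'a set" where
  "stencil \<epsilon> S z = insert z ((\<lambda>v. z + \<epsilon> *\<^sub>R v) ` S)"

definition neg_disc_inf_lap ::
  "'a::euclidean_space set set \<Rightarrow> real \<Rightarrow> 'a set \<Rightarrow> ('a \<Rightarrow> real) \<Rightarrow> 'a \<Rightarrow> real" where
  "neg_disc_inf_lap Th \<epsilon> S w z =
     (2 * w z - Max (lagrange_interp Th w ` stencil \<epsilon> S z)
              - Min (lagrange_interp Th w ` stencil \<epsilon> S z)) / \<epsilon>\<^sup>2"

definition self_adjoint :: "('a::euclidean_space \<Rightarrow> 'a) \<Rightarrow> bool" where
  "self_adjoint A \<longleftrightarrow> linear A \<and> (\<forall>x y. A x \<bullet> y = x \<bullet> A y)"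

definition lambda_max :: "('a::euclidean_space \<Rightarrow> 'a) \<Rightarrow> real" where
  "lambda_max A = Max {l. \<exists>v. v \<noteq> 0 \<and> A v = l *\<^sub>R v}"

definition strict_local_max_in :: "('a::euclidean_space \<Rightarrow> real) \<Rightarrow> 'a set \<Rightarrow> bool" where
  "strict_local_max_in f U \<longleftrightarrow>
     (\<exists>x\<in>U. \<exists>r>0. \<forall>y\<in>ball x r. y \<noteq> x \<longrightarrow> f y < f x)"

end

theory Submission
  imports Defs
begin

text \<open>Let \<open>\<phi>\<close> attain its maximum over the closed ball \<open>cball z \<epsilon>\<close> at \<open>w\<close>. Since \<open>\<phi>\<close> is
  quadratic and has no strict local maximum in \<open>ball z \<epsilon>\<close>, \<open>w = z + \<epsilon> v0\<close> can be taken on the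
  sphere, and \<open>\<phi> z \<le> \<phi> w\<close>. Reflecting a unit vector \<open>v\<close> in the axis through \<open>v0\<close> shows
  \<open>\<phi> (z + \<epsilon> v) \<ge> \<phi> z - 3/2 K \<epsilon>\<^sup>2 |v - v0|\<^sup>2\<close> with \<open>K = onorm A\<close>, so the best stencil
  direction \<open>vs\<close> satisfies \<open>\<phi> (z + \<epsilon> vs) \<ge> \<phi> z - 3/2 K \<epsilon>\<^sup>2 \<theta>\<^sup>2\<close>. The second difference of \<open>\<phi>\<close>
  in direction \<open>vs\<close> is \<open>\<epsilon>\<^sup>2 (vs \<bullet> A vs) \<le> \<epsilon>\<^sup>2 lambda_max A\<close>; together these bound
  \<open>2 \<phi> z - max - min\<close> over the stencil from below. The P1 interpolant of a quadratic differs from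
  it by at most \<open>K h\<^sup>2 / 2\<close> on a simplex of diameter at most \<open>h\<close>, which moves max and min by at
  most that much. Hence \<open>C = 3/2 K\<close> works, independently of the shape regularity constant.\<close>

lemma linear_coeff_zero_if_nonpos_near_zero:
  fixes p q d :: real
  assumes "d > 0" and nonpos: "\<And>s. \<bar>s\<bar> \<le> d \<Longrightarrow> p * s + q * s\<^sup>2 \<le> 0"
  shows "p = 0"
proof (rule ccontr)
  assume "p \<noteq> 0"
  define s where "s = min d (\<bar>p\<bar> / (2 * (\<bar>q\<bar> + 1)))"
  have "s > 0" using \<open>d > 0\<close> \<open>p \<noteq> 0\<close> by (simp add: s_def)
  have "\<bar>q\<bar> * s < \<bar>p\<bar>"
  proof -
    have "\<bar>q\<bar> * s \<le> \<bar>q\<bar> * (\<bar>p\<bar> / (2 * (\<bar>q\<bar> + 1)))"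
      by (rule mult_left_mono) (auto simp: s_def)
    also have "\<dots> < \<bar>p\<bar>"
      using \<open>p \<noteq> 0\<close> by (simp add: field_simps, intro add_nonneg_pos) auto
    finally show ?thesis .
  qed
  moreover have "\<bar>p\<bar> \<le> \<bar>q\<bar> * s"
  proof -
    have "\<bar>s\<bar> \<le> d" using \<open>s > 0\<close> by (simp add: s_def)
    then have "p * s + q * s\<^sup>2 \<le> 0" "- p * s + q * s\<^sup>2 \<le> 0"
      using nonpos[of s] nonpos[of "- s"] by auto
    then have "\<bar>p\<bar> * s \<le> - q * s\<^sup>2"
      by (cases "p \<ge> 0") auto
    also have "\<dots> \<le> (\<bar>q\<bar> * s) * s"
      using mult_right_mono[of "- q" "\<bar>q\<bar>" "s\<^sup>2"] by (simp add: power2_eq_square mult.assoc)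
    finally show ?thesis
      using \<open>s > 0\<close> by (rule mult_right_le_imp_le)
  qed
  ultimately show False
    by simp
qed

lemma self_adjoint_imp_linear: "self_adjoint A \<Longrightarrow> linear A"
  unfolding self_adjoint_def by simp

lemma linear_quadratic_form_scale:
  assumes "linear A"
  shows "(s *\<^sub>R x) \<bullet> A (s *\<^sub>R x) = s\<^sup>2 * (x \<bullet> A x)"
  using assms by (simp add: linear_scale power2_eq_square)

lemma self_adjoint_quadratic_form_add:
  assumes "self_adjoint A"
  shows "(x + y) \<bullet> A (x + y) = x \<bullet> A x + 2 * (A x \<bullet> y) + y \<bullet> A y"
proof -
  have "linear A" and "x \<bullet> A y = A x \<bullet> y"
    using assms unfolding self_adjoint_def by auto
  then show ?thesis
    by (simp add: linear_add inner_add_left inner_add_right inner_commute[of y "A x"])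
qed

lemma quadratic_form_abs_le_onorm:
  fixes A :: "'a::euclidean_space \<Rightarrow> 'a"
  assumes "linear A"
  shows "\<bar>x \<bullet> A x\<bar> \<le> onorm A * (norm x)\<^sup>2"
proof -
  have "\<bar>x \<bullet> A x\<bar> \<le> norm x * norm (A x)"
    by (rule Cauchy_Schwarz_ineq2)
  also have "\<dots> \<le> norm x * (onorm A * norm x)"
    using assms by (simp add: mult_left_mono onorm linear_conv_bounded_linear)
  finally show ?thesis
    by (simp add: power2_eq_square algebra_simps)
qed

lemma finite_eigenvalues_self_adjoint:
  assumes "self_adjoint A"
  shows "finite {l. \<exists>v. v \<noteq> 0 \<and> A v = l *\<^sub>R v}" (is "finite ?E")
proof -
  define eigvec where "eigvec l = (SOME v. v \<noteq> 0 \<and> A v = l *\<^sub>R v)" for l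
  have eigvec: "eigvec l \<noteq> 0" "A (eigvec l) = l *\<^sub>R eigvec l" if "l \<in> ?E" for l
    using someI_ex[of "\<lambda>v. v \<noteq> 0 \<and> A v = l *\<^sub>R v"] that by (auto simp: eigvec_def)
  have "inj_on eigvec ?E"
    by (rule inj_onI) (metis eigvec scaleR_cancel_right)
  have "pairwise orthogonal (eigvec ` ?E)"
  proof (rule pairwiseI)
    fix x y assume "x \<in> eigvec ` ?E" "y \<in> eigvec ` ?E" and ne: "x \<noteq> y"
    then obtain l m where l: "l \<in> ?E" and m: "m \<in> ?E" and xy: "x = eigvec l" "y = eigvec m"
      by blast
    have "l * (eigvec l \<bullet> eigvec m) = A (eigvec l) \<bullet> eigvec m"
      using eigvec(2)[OF l] by simp
    also have "\<dots> = eigvec l \<bullet> A (eigvec m)"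
      using assms unfolding self_adjoint_def by blast
    also have "\<dots> = m * (eigvec l \<bullet> eigvec m)"
      using eigvec(2)[OF m] by simp
    finally have "(l - m) * (eigvec l \<bullet> eigvec m) = 0"
      by (simp add: left_diff_distrib)
    moreover have "l \<noteq> m"
      using ne xy by blast
    ultimately show "orthogonal x y"
      unfolding xy orthogonal_def by simp
  qed
  moreover have "0 \<notin> eigvec ` ?E"
    by (metis (no_types, lifting) eigvec(1) imageE)
  ultimately have "independent (eigvec ` ?E)"
    by (rule pairwise_orthogonal_independent)
  then have "finite (eigvec ` ?E)"
    by (rule finiteI_independent)
  then show ?thesis
    using \<open>inj_on eigvec ?E\<close> by (rule finite_imageD)
qed

lemma self_adjoint_eigenvector_if_quadratic_max:
  assumes "self_adjoint A"
    and le: "\<And>u. u \<bullet> A u \<le> q * (norm u)\<^sup>2" and eq: "v \<bullet> A v = q * (norm v)\<^sup>2"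
  shows "A v = q *\<^sub>R v"
proof -
  have "linear A"
    using assms(1) by (rule self_adjoint_imp_linear)
  have "(A v - q *\<^sub>R v) \<bullet> t = 0" for t
  proof -
    have "2 * (A v \<bullet> t - q * (v \<bullet> t)) * s + (t \<bullet> A t - q * (t \<bullet> t)) * s\<^sup>2 \<le> 0" for s
    proof -
      have "(v + s *\<^sub>R t) \<bullet> A (v + s *\<^sub>R t) = v \<bullet> A v + 2 * s * (A v \<bullet> t) + s\<^sup>2 * (t \<bullet> A t)"
        using self_adjoint_quadratic_form_add[OF assms(1), of v "s *\<^sub>R t"]
          linear_quadratic_form_scale[OF \<open>linear A\<close>, of s t] by simp
      moreover have "(norm (v + s *\<^sub>R t))\<^sup>2 = (norm v)\<^sup>2 + 2 * s * (v \<bullet> t) + s\<^sup>2 * (t \<bullet> t)"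
        unfolding power2_norm_eq_inner
        by (simp add: inner_add_left inner_add_right inner_commute power2_eq_square algebra_simps)
      ultimately show ?thesis
        using le[of "v + s *\<^sub>R t"] eq by (simp add: algebra_simps)
    qed
    then have "2 * (A v \<bullet> t - q * (v \<bullet> t)) = 0"
      by (intro linear_coeff_zero_if_nonpos_near_zero[where d = 1]) auto
    then show ?thesis
      by (simp add: inner_diff_left)
  qed
  from this[of "A v - q *\<^sub>R v"] show ?thesis
    by simp
qed

lemma self_adjoint_quadratic_form_le_lambda_max:
  assumes "self_adjoint A" and "norm v = 1"
  shows "v \<bullet> A v \<le> lambda_max A"
proof -
  have "linear A"
    using assms(1) by (rule self_adjoint_imp_linear)
  have "continuous_on (sphere 0 1) (\<lambda>u. u \<bullet> A u)"
    using \<open>linear A\<close> by (intro continuous_intros linear_continuous_on) (simp add: linear_conv_bounded_linear)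
  moreover have "sphere (0::'a) 1 \<noteq> {}"
    using assms(2) by auto
  ultimately obtain v0 where "v0 \<in> sphere 0 1" and "\<forall>u\<in>sphere 0 1. u \<bullet> A u \<le> v0 \<bullet> A v0"
    using continuous_attains_sup[OF compact_sphere] by blast
  then have v0: "norm v0 = 1" and max: "\<And>u. norm u = 1 \<Longrightarrow> u \<bullet> A u \<le> v0 \<bullet> A v0"
    by auto
  define q where "q = v0 \<bullet> A v0"
  have rayleigh: "u \<bullet> A u \<le> q * (norm u)\<^sup>2" for u
  proof (cases "u = 0")
    case True
    then show ?thesis
      using \<open>linear A\<close> by (simp add: linear_0)
  next
    case False
    have "(inverse (norm u))\<^sup>2 * (u \<bullet> A u)
        = (inverse (norm u) *\<^sub>R u) \<bullet> A (inverse (norm u) *\<^sub>R u)"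
      using \<open>linear A\<close> by (simp only: linear_quadratic_form_scale)
    also have "\<dots> \<le> q"
      unfolding q_def using False by (intro max) simp
    finally show ?thesis
      using False by (simp add: field_simps)
  qed
  have "A v0 = q *\<^sub>R v0"
    using assms(1) rayleigh by (rule self_adjoint_eigenvector_if_quadratic_max) (simp add: q_def v0)
  then have "q \<le> lambda_max A"
    unfolding lambda_max_def using v0 finite_eigenvalues_self_adjoint[OF assms(1)]
    by (intro Max_ge) (auto intro!: exI[of _ v0])
  moreover have "v \<bullet> A v \<le> q"
    using max assms(2) by (simp add: q_def)
  ultimately show ?thesis
    by simp
qed

lemma reflection_of_unit_vector:
  fixes v v0 :: "'a::real_inner"
  assumes "norm v = 1" and "norm v0 = 1"
  shows "norm ((2 * (v \<bullet> v0)) *\<^sub>R v0 - v) = 1"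
    and "norm ((2 * (v \<bullet> v0)) *\<^sub>R v0 - v - v0) = norm (v - v0)"
    and "(2 * (v \<bullet> v0)) *\<^sub>R v0 - v - v0 = - (v - v0) - (norm (v - v0))\<^sup>2 *\<^sub>R v0"
proof -
  have vv: "v \<bullet> v = 1" and v0v0: "v0 \<bullet> v0 = 1"
    using assms by (simp_all add: dot_square_norm)
  have "(norm ((2 * (v \<bullet> v0)) *\<^sub>R v0 - v))\<^sup>2 = 1"
    unfolding power2_norm_eq_inner using vv v0v0
    by (simp add: inner_diff_left inner_diff_right inner_commute algebra_simps power2_eq_square)
  then show "norm ((2 * (v \<bullet> v0)) *\<^sub>R v0 - v) = 1"
    using norm_ge_zero by (smt (verit) power2_eq_1_iff)
  have "(norm ((2 * (v \<bullet> v0)) *\<^sub>R v0 - v - v0))\<^sup>2 = (norm (v - v0))\<^sup>2"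
    unfolding power2_norm_eq_inner using vv v0v0
    by (simp add: inner_diff_left inner_diff_right inner_commute algebra_simps power2_eq_square)
  then show "norm ((2 * (v \<bullet> v0)) *\<^sub>R v0 - v - v0) = norm (v - v0)"
    by (simp add: power2_eq_iff_nonneg)
  have "(norm (v - v0))\<^sup>2 = 2 - 2 * (v \<bullet> v0)"
    unfolding power2_norm_eq_inner using vv v0v0
    by (simp add: inner_diff_left inner_diff_right inner_commute)
  then show "(2 * (v \<bullet> v0)) *\<^sub>R v0 - v - v0 = - (v - v0) - (norm (v - v0))\<^sup>2 *\<^sub>R v0"
    by (simp add: scaleR_diff_left scaleR_2)
qed

lemma mesh_simplex_vertices:
  fixes Th :: "'a::euclidean_space set set"
  assumes "is_mesh Th" and "T \<in> Th"
  shows "\<not> affine_dependent (vertices T)" and "finite (vertices T)"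
    and "convex hull (vertices T) = T" and "card (vertices T) = DIM('a) + 1"
proof -
  have "int DIM('a) simplex T"
    using assms unfolding is_mesh_def by blast
  then obtain C :: "'a set" where C: "\<not> affine_dependent C" "int (card C) = int DIM('a) + 1"
      "T = convex hull C"
    unfolding simplex_def by blast
  have "vertices T = C"
    unfolding vertices_def C(3) extreme_point_of_convex_hull_affine_independent[OF C(1)] by simp
  then show "\<not> affine_dependent (vertices T)" "finite (vertices T)"
      "convex hull (vertices T) = T" "card (vertices T) = DIM('a) + 1"
    using C aff_independent_finite[OF C(1)] by simp_all
qed

lemma mesh_simplex_bounded:
  assumes "is_mesh Th" and "T \<in> Th"
  shows "bounded T"
  using finite_imp_compact_convex_hull[OF mesh_simplex_vertices(2)[OF assms]]
  unfolding mesh_simplex_vertices(3)[OF assms] by (rule compact_imp_bounded)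

lemma diameter_le_mesh_size:
  assumes "is_mesh Th" and "T \<in> Th"
  shows "diameter T \<le> mesh_size Th"
  using assms unfolding is_mesh_def mesh_size_def by simp

lemma mesh_size_pos:
  assumes "is_mesh Th"
  shows "mesh_size Th > 0"
proof -
  obtain T where T: "T \<in> Th"
    using assms unfolding is_mesh_def by blast
  have "\<not> card (vertices T) \<le> Suc 0"
    using mesh_simplex_vertices(4)[OF assms T] by simp
  then obtain p q where "p \<in> vertices T" "q \<in> vertices T" "p \<noteq> q"
    using card_le_Suc0_iff_eq[OF mesh_simplex_vertices(2)[OF assms T]] by blast
  moreover have "vertices T \<subseteq> T"
    using hull_subset[of "vertices T" convex] unfolding mesh_simplex_vertices(3)[OF assms T] .
  ultimately have "0 < dist p q" and "dist p q \<le> diameter T"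
    using diameter_bounded_bound[OF mesh_simplex_bounded[OF assms T], of p q] by auto
  then show ?thesis
    using diameter_le_mesh_size[OF assms T] by linarith
qed

lemma bary_coords_exists:
  assumes "finite V" and "x \<in> convex hull V"
  obtains c where "bary_coords V x c"
  using assms unfolding convex_hull_finite[OF \<open>finite V\<close>] bary_coords_def by blast

lemma bary_coords_unique:
  assumes "\<not> affine_dependent V" and "bary_coords V x c" and "bary_coords V x c'" and "v \<in> V"
  shows "c v = c' v"
proof (rule ccontr)
  assume "c v \<noteq> c' v"
  moreover have "finite V"
    using assms(1) by (rule aff_independent_finite)
  moreover have "sum (\<lambda>u. c u - c' u) V = 0" and "(\<Sum>u\<in>V. (c u - c' u) *\<^sub>R u) = 0"
    using assms(2,3) unfolding bary_coords_def
    by (simp_all add: sum_subtractf scaleR_diff_left)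
  ultimately have "affine_dependent V"
    using assms(4) unfolding affine_dependent_explicit_finite[OF \<open>finite V\<close>]
    by (intro exI[of _ "\<lambda>u. c u - c' u"]) auto
  with assms(1) show False
    by contradiction
qed

lemma bary_coords_zero_extend:
  assumes "finite V" and "W \<subseteq> V" and "bary_coords W x c"
  shows "bary_coords V x (\<lambda>v. if v \<in> W then c v else 0)"
    and "(\<Sum>v\<in>V. (if v \<in> W then c v else 0) * f v) = (\<Sum>v\<in>W. c v * f v)"
proof -
  have restrict: "(\<Sum>v\<in>V. if v \<in> W then g v else 0) = sum g W" for g :: "_ \<Rightarrow> 'b::comm_monoid_add"
    using sum.inter_restrict[OF assms(1), of g W] assms(2) by (simp add: Int_absorb1)
  have "(if v \<in> W then c v else 0) *\<^sub>R v = (if v \<in> W then c v *\<^sub>R v else 0)" for v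
    by simp
  then show "bary_coords V x (\<lambda>v. if v \<in> W then c v else 0)"
    using assms(3) restrict[of c] restrict[of "\<lambda>v. c v *\<^sub>R v"]
    unfolding bary_coords_def by simp
  have "(if v \<in> W then c v else 0) * f v = (if v \<in> W then c v * f v else 0)" for v
    by simp
  then show "(\<Sum>v\<in>V. (if v \<in> W then c v else 0) * f v) = (\<Sum>v\<in>W. c v * f v)"
    using restrict[of "\<lambda>v. c v * f v"] by simp
qed

text \<open>Conformity of the mesh makes the P1 interpolant well defined: two simplices containing
  \<open>x\<close> meet in the hull of their common vertices, and barycentric coordinates there extend by
  zero to both simplices.\<close>

lemma mesh_bary_combinations_agree:
  assumes "is_mesh Th" and "T1 \<in> Th" and "T2 \<in> Th" and "x \<in> T1" and "x \<in> T2"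
    and c1: "bary_coords (vertices T1) x c1" and c2: "bary_coords (vertices T2) x c2"
  shows "(\<Sum>v\<in>vertices T1. c1 v * f v) = (\<Sum>v\<in>vertices T2. c2 v * f v)"
proof -
  let ?V = "vertices T1 \<inter> vertices T2"
  have "finite ?V"
    using mesh_simplex_vertices(2)[OF assms(1,2)] by simp
  moreover have "x \<in> convex hull ?V"
    using assms(1-5) unfolding is_mesh_def by blast
  ultimately obtain c where c: "bary_coords ?V x c"
    by (rule bary_coords_exists)
  define c0 where "c0 v = (if v \<in> ?V then c v else 0)" for v
  have "(\<Sum>v\<in>vertices Ti. ci v * f v) = (\<Sum>v\<in>?V. c v * f v)"
    if "Ti \<in> Th" "?V \<subseteq> vertices Ti" "bary_coords (vertices Ti) x ci" for Ti ci
  proof -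
    have "finite (vertices Ti)"
      using mesh_simplex_vertices(2)[OF assms(1) that(1)] .
    note ext = bary_coords_zero_extend[OF this that(2) c]
    have "(\<Sum>v\<in>vertices Ti. ci v * f v) = (\<Sum>v\<in>vertices Ti. c0 v * f v)"
      using bary_coords_unique[OF mesh_simplex_vertices(1)[OF assms(1) that(1)] that(3) ext(1)]
      by (simp add: c0_def)
    then show ?thesis
      using ext(2) by (simp add: c0_def)
  qed
  from this[OF assms(2) _ c1] this[OF assms(3) _ c2] show ?thesis
    by simp
qed

lemma lagrange_interp_eq:
  assumes "is_mesh Th" and "T \<in> Th" and "x \<in> T" and "bary_coords (vertices T) x c"
  shows "lagrange_interp Th f x = (\<Sum>v\<in>vertices T. c v * f v)"
  unfolding lagrange_interp_def
proof (rule the_equality)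
  show "\<exists>T'\<in>Th. x \<in> T' \<and> (\<exists>c'. bary_coords (vertices T') x c'
      \<and> (\<Sum>v\<in>vertices T. c v * f v) = (\<Sum>v\<in>vertices T'. c' v * f v))"
    using assms(2-4) by blast
  fix y
  assume "\<exists>T'\<in>Th. x \<in> T' \<and> (\<exists>c'. bary_coords (vertices T') x c'
      \<and> y = (\<Sum>v\<in>vertices T'. c' v * f v))"
  then obtain T' c' where T': "T' \<in> Th" "x \<in> T'" "bary_coords (vertices T') x c'"
    and y: "y = (\<Sum>v\<in>vertices T'. c' v * f v)"
    by blast
  show "y = (\<Sum>v\<in>vertices T. c v * f v)"
    unfolding y using T' by (rule mesh_bary_combinations_agree[OF assms(1) _ assms(2) _ assms(3) _ assms(4)])
qed

lemma ball_infdist_frontier_subset: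
  fixes \<Omega> :: "'a::euclidean_space set"
  assumes "open \<Omega>" and "x \<in> \<Omega>"
  shows "ball x (infdist x (frontier \<Omega>)) \<subseteq> \<Omega>"
proof
  fix y
  assume y: "y \<in> ball x (infdist x (frontier \<Omega>))"
  show "y \<in> \<Omega>"
  proof (rule ccontr)
    assume "y \<notin> \<Omega>"
    then obtain p where p: "p \<in> closed_segment x y" "p \<in> frontier \<Omega>"
      using connected_Int_frontier[of "closed_segment x y" \<Omega>] assms(2) by blast
    have "infdist x (frontier \<Omega>) \<le> dist x p"
      using p(2) by (rule infdist_le)
    also have "\<dots> \<le> dist x y"
      using dist_in_closed_segment[OF p(1)] by (simp add: dist_commute)
    finally show False
      using y by simp
  qed
qed

lemma cball_subset_mesh:
  assumes "open \<Omega>" and "inner_set \<Omega> (mesh_size Th) \<subseteq> mesh_domain Th"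
    and "mesh_size Th \<le> \<epsilon>" and "z \<in> inner_set \<Omega> (2 * \<epsilon>)"
  shows "cball z \<epsilon> \<subseteq> \<Union>Th"
proof
  fix y
  assume y: "y \<in> cball z \<epsilon>"
  have z: "z \<in> \<Omega>" "infdist z (frontier \<Omega>) > 2 * \<epsilon>"
    using assms(4) unfolding inner_set_def by auto
  have "infdist z (frontier \<Omega>) \<le> infdist y (frontier \<Omega>) + dist z y"
    by (rule infdist_triangle)
  then have "infdist y (frontier \<Omega>) > mesh_size Th"
    using y z(2) assms(3) by simp
  moreover have "dist z y < infdist z (frontier \<Omega>)"
    using y z(2) zero_le_dist[of z y] unfolding mem_cball by linarith
  then have "y \<in> \<Omega>"
    using ball_infdist_frontier_subset[OF assms(1) z(1)] by auto
  ultimately have "y \<in> mesh_domain Th"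
    using assms(2) unfolding inner_set_def by blast
  then show "y \<in> \<Union>Th"
    unfolding mesh_domain_def using interior_subset by blast
qed

lemma stencil_subset_cball:
  assumes "0 \<le> \<epsilon>" and "S \<subseteq> sphere 0 1"
  shows "stencil \<epsilon> S z \<subseteq> cball z \<epsilon>"
  using assms unfolding stencil_def by (auto simp: dist_norm)

lemma Max_image_le_Max_plus:
  fixes f g :: "'a \<Rightarrow> 'b::linordered_ab_group_add"
  assumes "finite N" and "N \<noteq> {}" and "\<And>y. y \<in> N \<Longrightarrow> f y \<le> g y + \<delta>"
  shows "Max (f ` N) \<le> Max (g ` N) + \<delta>"
  using assms by (subst Max_le_iff) (auto intro: order.trans[OF _ add_right_mono[OF Max_ge]])

lemma Min_image_le_Min_plus:
  fixes f g :: "'a \<Rightarrow> 'b::linordered_ab_group_add"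
  assumes "finite N" and "N \<noteq> {}" and "\<And>y. y \<in> N \<Longrightarrow> f y \<le> g y + \<delta>"
  shows "Min (f ` N) \<le> Min (g ` N) + \<delta>"
proof -
  have "Min (g ` N) \<in> g ` N"
    using assms(1,2) by simp
  then obtain y where "y \<in> N" and "Min (g ` N) = g y"
    by blast
  moreover have "Min (f ` N) \<le> f y"
    using \<open>y \<in> N\<close> assms(1) by simp
  ultimately show ?thesis
    using assms(3) by fastforce
qed

locale quadratic_function =
  fixes A :: "'a::euclidean_space \<Rightarrow> 'a" and b :: 'a and c :: real and \<phi> :: "'a \<Rightarrow> real"
  assumes self_adjoint: "self_adjoint A"
    and \<phi>_eq: "\<phi> x = c + b \<bullet> x + (1/2) * (x \<bullet> A x)"
begin

lemma linear: "linear A"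
  using self_adjoint by (rule self_adjoint_imp_linear)

lemma onorm_nonneg: "0 \<le> onorm A"
  using linear by (simp add: onorm_pos_le linear_conv_bounded_linear)

lemma taylor: "\<phi> (x + y) = \<phi> x + (b + A x) \<bullet> y + (1/2) * (y \<bullet> A y)"
  using self_adjoint_quadratic_form_add[OF self_adjoint, of x y]
  by (simp add: \<phi>_eq inner_add_left inner_add_right algebra_simps)

lemma taylor_ray: "\<phi> (x + s *\<^sub>R t) = \<phi> x + s * ((b + A x) \<bullet> t) + (1/2) * s\<^sup>2 * (t \<bullet> A t)"
  using taylor[of x "s *\<^sub>R t"] linear_quadratic_form_scale[OF linear] by simp

lemma continuous_on: "continuous_on S \<phi>"
proof -
  have "continuous_on S (\<lambda>x. c + b \<bullet> x + (1/2) * (x \<bullet> A x))"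
    using linear by (intro continuous_intros linear_continuous_on) (simp add: linear_conv_bounded_linear)
  then show ?thesis
    using \<phi>_eq by simp
qed

text \<open>Along a line through a local maximiser the linear term of \<open>\<phi>\<close> vanishes, so \<open>\<phi>\<close> is
  constant on the line once it takes the maximal value at a second point.\<close>

lemma constant_on_line_if_local_max:
  assumes "r > 0" and max: "\<And>y. y \<in> ball x0 r \<Longrightarrow> \<phi> y \<le> \<phi> x0"
    and "y \<in> ball x0 r" and "\<phi> y = \<phi> x0"
  shows "\<phi> (x0 + s *\<^sub>R (y - x0)) = \<phi> x0"
proof -
  define t where "t = y - x0"
  have "((b + A x0) \<bullet> t) * s + ((1/2) * (t \<bullet> A t)) * s\<^sup>2 \<le> 0" if "\<bar>s\<bar> \<le> 1" for s
  proof -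
    have "norm (s *\<^sub>R t) \<le> norm t"
      using that by (simp add: mult_left_le_one_le)
    then have "x0 + s *\<^sub>R t \<in> ball x0 r"
      using \<open>y \<in> ball x0 r\<close> by (simp add: t_def dist_norm norm_minus_commute)
    then have "\<phi> (x0 + s *\<^sub>R t) \<le> \<phi> x0"
      by (rule max)
    then show ?thesis
      using taylor_ray[of x0 s t] by (simp add: algebra_simps)
  qed
  then have "(b + A x0) \<bullet> t = 0"
    by (intro linear_coeff_zero_if_nonpos_near_zero[where d = 1 and q = "(1/2) * (t \<bullet> A t)"]) auto
  moreover have "t \<bullet> A t = 0"
    using taylor[of x0 t] \<open>\<phi> y = \<phi> x0\<close> calculation by (simp add: t_def)
  ultimately show ?thesis
    using taylor_ray[of x0 s t] by (simp add: t_def)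
qed

text \<open>A maximiser over the closed ball inside the open ball is not strict, hence lies on a line
  of maximisers, which leaves the ball through the sphere.\<close>

lemma max_on_cball_attained_on_sphere:
  assumes "\<epsilon> > 0" and no_strict_max: "\<not> strict_local_max_in \<phi> (ball z \<epsilon>)"
  obtains w where "w \<in> sphere z \<epsilon>" and "\<And>y. y \<in> cball z \<epsilon> \<Longrightarrow> \<phi> y \<le> \<phi> w"
proof -
  have "cball z \<epsilon> \<noteq> {}"
    using \<open>\<epsilon> > 0\<close> by simp
  then obtain x0 where x0: "x0 \<in> cball z \<epsilon>" and max: "\<And>y. y \<in> cball z \<epsilon> \<Longrightarrow> \<phi> y \<le> \<phi> x0"
    using continuous_attains_sup[OF compact_cball _ continuous_on] by blast
  show thesis
  proof (cases "x0 \<in> sphere z \<epsilon>")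
    case True
    then show thesis
      using that max by blast
  next
    case False
    then have "x0 \<in> ball z \<epsilon>"
      using x0 by simp
    define r where "r = \<epsilon> - dist z x0"
    have "r > 0"
      using \<open>x0 \<in> ball z \<epsilon>\<close> by (simp add: r_def)
    have sub: "ball x0 r \<subseteq> cball z \<epsilon>"
    proof
      fix y
      assume "y \<in> ball x0 r"
      then show "y \<in> cball z \<epsilon>"
        using dist_triangle[of z y x0] by (simp add: r_def)
    qed
    have "\<not> (\<forall>y\<in>ball x0 r. y \<noteq> x0 \<longrightarrow> \<phi> y < \<phi> x0)"
      using no_strict_max \<open>x0 \<in> ball z \<epsilon>\<close> \<open>r > 0\<close> unfolding strict_local_max_in_def by blast
    then obtain y where y: "y \<in> ball x0 r" "y \<noteq> x0" and "\<not> \<phi> y < \<phi> x0"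
      by blast
    moreover have "\<phi> y \<le> \<phi> x0"
      using max sub y(1) by blast
    ultimately have "\<phi> y = \<phi> x0"
      by simp
    obtain d where "x0 + d *\<^sub>R (y - x0) \<in> frontier (cball z \<epsilon>)"
      using ray_to_frontier[of "cball z \<epsilon>" x0 "y - x0"] \<open>x0 \<in> ball z \<epsilon>\<close> y(2) by auto
    moreover have "\<phi> (x0 + d *\<^sub>R (y - x0)) = \<phi> x0"
      using constant_on_line_if_local_max[OF \<open>r > 0\<close> _ y(1) \<open>\<phi> y = \<phi> x0\<close>] max sub
      by blast
    ultimately show thesis
      using that max by simp
  qed
qed


lemma bary_combination_error:
  assumes "finite V" and \<beta>: "bary_coords V x \<beta>" and near: "\<And>v. v \<in> V \<Longrightarrow> norm (v - x) \<le> h"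
  shows "\<bar>(\<Sum>v\<in>V. \<beta> v * \<phi> v) - \<phi> x\<bar> \<le> (1/2) * onorm A * h\<^sup>2"
proof -
  define q where "q v = (v - x) \<bullet> A (v - x)" for v
  have nonneg: "\<And>v. v \<in> V \<Longrightarrow> 0 \<le> \<beta> v" and sum1: "sum \<beta> V = 1"
    and comb: "(\<Sum>v\<in>V. \<beta> v *\<^sub>R v) = x"
    using \<beta> unfolding bary_coords_def by auto
  have centred: "(\<Sum>v\<in>V. \<beta> v *\<^sub>R (v - x)) = 0"
    using sum1 comb by (simp add: scaleR_diff_right sum_subtractf scaleR_sum_left[symmetric])
  have expand: "\<phi> v = \<phi> x + (b + A x) \<bullet> (v - x) + (1/2) * q v" for v
    using taylor[of x "v - x"] by (simp add: q_def)
  have "(\<Sum>v\<in>V. \<beta> v * \<phi> v)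
      = (\<Sum>v\<in>V. \<beta> v * \<phi> x + (b + A x) \<bullet> (\<beta> v *\<^sub>R (v - x)) + (1/2) * (\<beta> v * q v))"
  proof (rule sum.cong)
    fix v
    show "\<beta> v * \<phi> v = \<beta> v * \<phi> x + (b + A x) \<bullet> (\<beta> v *\<^sub>R (v - x)) + (1/2) * (\<beta> v * q v)"
      unfolding expand[of v] by (simp add: algebra_simps)
  qed simp
  also have "\<dots> = \<phi> x + (1/2) * (\<Sum>v\<in>V. \<beta> v * q v)"
  proof -
    have "(\<Sum>v\<in>V. \<beta> v * \<phi> x) = \<phi> x"
      using sum1 by (simp add: sum_distrib_right[symmetric])
    moreover have "(\<Sum>v\<in>V. (b + A x) \<bullet> (\<beta> v *\<^sub>R (v - x))) = 0"
      using centred by (metis inner_sum_right inner_zero_right)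
    ultimately show ?thesis
      by (simp only: sum.distrib sum_distrib_left[symmetric])
  qed
  finally have "(\<Sum>v\<in>V. \<beta> v * \<phi> v) - \<phi> x = (1/2) * (\<Sum>v\<in>V. \<beta> v * q v)"
    by simp
  moreover have "\<bar>\<Sum>v\<in>V. \<beta> v * q v\<bar> \<le> onorm A * h\<^sup>2"
  proof -
    have "\<bar>\<Sum>v\<in>V. \<beta> v * q v\<bar> \<le> (\<Sum>v\<in>V. \<beta> v * (onorm A * h\<^sup>2))"
    proof (rule order.trans[OF sum_abs sum_mono])
      fix v
      assume "v \<in> V"
      have "\<bar>q v\<bar> \<le> onorm A * (norm (v - x))\<^sup>2"
        unfolding q_def by (rule quadratic_form_abs_le_onorm[OF linear])
      also have "\<dots> \<le> onorm A * h\<^sup>2"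
        using near[OF \<open>v \<in> V\<close>] onorm_nonneg by (intro mult_left_mono power_mono) auto
      finally show "\<bar>\<beta> v * q v\<bar> \<le> \<beta> v * (onorm A * h\<^sup>2)"
        using nonneg[OF \<open>v \<in> V\<close>] by (simp add: abs_mult mult_left_mono)
    qed
    also have "\<dots> = onorm A * h\<^sup>2"
      using sum1 by (simp add: sum_distrib_right[symmetric])
    finally show ?thesis .
  qed
  ultimately show ?thesis
    by linarith
qed

lemma lagrange_interp_error:
  assumes "is_mesh Th" and "x \<in> \<Union>Th"
  shows "\<bar>lagrange_interp Th \<phi> x - \<phi> x\<bar> \<le> (1/2) * onorm A * (mesh_size Th)\<^sup>2"
proof -
  obtain T where T: "T \<in> Th" "x \<in> T"
    using assms(2) by blast
  note vertices = mesh_simplex_vertices[OF assms(1) T(1)]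
  obtain \<beta> where \<beta>: "bary_coords (vertices T) x \<beta>"
    using bary_coords_exists[OF vertices(2)] T(2) vertices(3) by metis
  have "norm (v - x) \<le> mesh_size Th" if "v \<in> vertices T" for v
  proof -
    have "v \<in> T"
      using that hull_subset[of "vertices T" convex] unfolding vertices(3) by blast
    then have "dist v x \<le> diameter T"
      using diameter_bounded_bound[OF mesh_simplex_bounded[OF assms(1) T(1)] _ T(2)] by blast
    then show ?thesis
      using diameter_le_mesh_size[OF assms(1) T(1)] by (simp add: dist_norm)
  qed
  then show ?thesis
    using bary_combination_error[OF vertices(2) \<beta>] lagrange_interp_eq[OF assms(1) T \<beta>] by simp
qed


text \<open>Reflecting \<open>v\<close> in the axis through the maximiser \<open>v0\<close> gives a competitor \<open>v'\<close> with
  \<open>v' - v0 = -(v - v0) - |v - v0|\<^sup>2 v0\<close>; comparing \<open>\<phi>\<close> at \<open>z + \<epsilon> v'\<close> and at \<open>z\<close> with its value at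
  the maximiser cancels the first-order term up to \<open>O(|v - v0|\<^sup>2)\<close>.\<close>

lemma sphere_max_reflection_bound:
  assumes "0 \<le> \<epsilon>" and "norm v0 = 1" and max: "\<And>y. y \<in> cball z \<epsilon> \<Longrightarrow> \<phi> y \<le> \<phi> (z + \<epsilon> *\<^sub>R v0)"
    and "norm v = 1" and "norm (v - v0) \<le> 1"
  shows "\<phi> (z + \<epsilon> *\<^sub>R v) - \<phi> z \<ge> - 3/2 * onorm A * \<epsilon>\<^sup>2 * (norm (v - v0))\<^sup>2"
proof -
  define K where "K = onorm A"
  define E where "E = \<epsilon>\<^sup>2"
  define x0 where "x0 = z + \<epsilon> *\<^sub>R v0"
  define g where "g = b + A x0"
  define w where "w = v - v0"
  define W where "W = (norm w)\<^sup>2"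
  define w' where "w' = (2 * (v \<bullet> v0)) *\<^sub>R v0 - v - v0"
  note reflection = reflection_of_unit_vector[OF \<open>norm v = 1\<close> \<open>norm v0 = 1\<close>]
  have "E \<ge> 0" "K \<ge> 0" "W \<ge> 0" "W \<le> 1"
    using onorm_nonneg \<open>norm (v - v0) \<le> 1\<close> by (simp_all add: E_def K_def W_def w_def power_le_one)
  have quad_bound: "u \<bullet> A u \<ge> - K * (norm u)\<^sup>2" "u \<bullet> A u \<le> K * (norm u)\<^sup>2" for u
    using quadratic_form_abs_le_onorm[OF linear, of u] by (simp_all add: K_def abs_le_iff)
  have at_v: "\<phi> (z + \<epsilon> *\<^sub>R v) = \<phi> x0 + \<epsilon> * (g \<bullet> w) + (1/2) * (E * (w \<bullet> A w))"
    using taylor_ray[of x0 \<epsilon> w] by (simp add: x0_def g_def w_def E_def algebra_simps)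
  have at_z: "\<phi> z = \<phi> x0 - \<epsilon> * (g \<bullet> v0) + (1/2) * (E * (v0 \<bullet> A v0))"
    using taylor_ray[of x0 "- \<epsilon>" v0] by (simp add: x0_def g_def E_def)
  have "x0 + \<epsilon> *\<^sub>R w' = z + \<epsilon> *\<^sub>R ((2 * (v \<bullet> v0)) *\<^sub>R v0 - v)"
    by (simp add: x0_def w'_def algebra_simps)
  moreover have "z + \<epsilon> *\<^sub>R ((2 * (v \<bullet> v0)) *\<^sub>R v0 - v) \<in> cball z \<epsilon>"
    using reflection(1) \<open>0 \<le> \<epsilon>\<close> by (simp add: dist_norm)
  ultimately have "\<phi> (x0 + \<epsilon> *\<^sub>R w') \<le> \<phi> x0"
    using max unfolding x0_def by metis
  then have "\<epsilon> * (g \<bullet> w') + (1/2) * (E * (w' \<bullet> A w')) \<le> 0"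
    using taylor_ray[of x0 \<epsilon> w'] by (simp add: g_def E_def)
  moreover have "\<epsilon> * (g \<bullet> w') = - (\<epsilon> * (g \<bullet> w)) - W * (\<epsilon> * (g \<bullet> v0))"
    unfolding w'_def reflection(3) by (simp add: W_def w_def inner_diff_right algebra_simps)
  moreover have "E * (w' \<bullet> A w') \<ge> - (K * E * W)"
    using mult_left_mono[OF quad_bound(1)[of w'] \<open>E \<ge> 0\<close>] reflection(2)
    by (simp add: W_def w_def w'_def algebra_simps)
  moreover have "E * (w \<bullet> A w) \<ge> - (K * E * W)"
    using mult_left_mono[OF quad_bound(1)[of w] \<open>E \<ge> 0\<close>] by (simp add: W_def algebra_simps)
  moreover have "W * (\<epsilon> * (g \<bullet> v0)) \<le> W * (\<phi> x0 - \<phi> z) + (1/2) * (K * E * W)"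
  proof -
    have "E * (v0 \<bullet> A v0) \<le> E * K"
      using mult_left_mono[OF quad_bound(2)[of v0] \<open>E \<ge> 0\<close>] \<open>norm v0 = 1\<close> by simp
    then have "\<epsilon> * (g \<bullet> v0) \<le> (\<phi> x0 - \<phi> z) + (1/2) * (K * E)"
      using at_z by (simp add: algebra_simps)
    from mult_left_mono[OF this \<open>W \<ge> 0\<close>] show ?thesis
      by (simp add: algebra_simps)
  qed
  moreover have "W * (\<phi> x0 - \<phi> z) \<le> \<phi> x0 - \<phi> z"
    using mult_right_mono[OF \<open>W \<le> 1\<close>, of "\<phi> x0 - \<phi> z"] max[of z] \<open>0 \<le> \<epsilon>\<close>
    by (simp add: x0_def)
  ultimately have "\<phi> (z + \<epsilon> *\<^sub>R v) - \<phi> z \<ge> - 3/2 * (K * E * W)"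
    using at_v by linarith
  then show ?thesis
    by (simp add: K_def E_def W_def w_def algebra_simps)
qed


lemma stencil_second_difference_ge:
  assumes "\<epsilon> > 0" and "\<theta> \<le> 1" and "direction_set \<theta> S"
    and no_strict_max: "\<not> strict_local_max_in \<phi> (ball z \<epsilon>)"
  shows "2 * \<phi> z - Max (\<phi> ` stencil \<epsilon> S z) - Min (\<phi> ` stencil \<epsilon> S z)
    \<ge> - \<epsilon>\<^sup>2 * lambda_max A - 3/2 * onorm A * \<epsilon>\<^sup>2 * \<theta>\<^sup>2"
proof -
  have "finite S" and S_sphere: "S \<subseteq> sphere 0 1" and S_sym: "\<And>v. v \<in> S \<Longrightarrow> - v \<in> S"
    and S_dense: "\<And>v. norm v = 1 \<Longrightarrow> \<exists>u\<in>S. norm (v - u) \<le> \<theta>"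
    using assms(3) unfolding direction_set_def by auto
  define f where "f v = \<phi> (z + \<epsilon> *\<^sub>R v)" for v
  obtain w where "w \<in> sphere z \<epsilon>" and w_max: "\<And>y. y \<in> cball z \<epsilon> \<Longrightarrow> \<phi> y \<le> \<phi> w"
    using max_on_cball_attained_on_sphere[OF assms(1) no_strict_max] by blast
  define v0 where "v0 = (1 / \<epsilon>) *\<^sub>R (w - z)"
  have "norm v0 = 1" and "w = z + \<epsilon> *\<^sub>R v0"
    using \<open>w \<in> sphere z \<epsilon>\<close> \<open>\<epsilon> > 0\<close> by (auto simp: v0_def dist_norm norm_minus_commute)
  obtain u where "u \<in> S" and "norm (v0 - u) \<le> \<theta>"
    using S_dense[OF \<open>norm v0 = 1\<close>] by blast
  have near_max: "f u - \<phi> z \<ge> - 3/2 * onorm A * \<epsilon>\<^sup>2 * \<theta>\<^sup>2"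
  proof -
    have "norm (u - v0) \<le> \<theta>"
      using \<open>norm (v0 - u) \<le> \<theta>\<close> by (simp add: norm_minus_commute)
    then have "3/2 * onorm A * \<epsilon>\<^sup>2 * (norm (u - v0))\<^sup>2 \<le> 3/2 * onorm A * \<epsilon>\<^sup>2 * \<theta>\<^sup>2"
      using onorm_nonneg by (intro mult_left_mono power_mono) auto
    moreover have "f u - \<phi> z \<ge> - 3/2 * onorm A * \<epsilon>\<^sup>2 * (norm (u - v0))\<^sup>2"
      unfolding f_def
      using sphere_max_reflection_bound[of \<epsilon> v0 z u] w_max \<open>w = z + \<epsilon> *\<^sub>R v0\<close> \<open>norm v0 = 1\<close>
        \<open>u \<in> S\<close> S_sphere \<open>norm (u - v0) \<le> \<theta>\<close> \<open>\<theta> \<le> 1\<close> \<open>\<epsilon> > 0\<close> by auto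
    ultimately show ?thesis
      by linarith
  qed
  have "Max (f ` S) \<in> f ` S"
    using \<open>finite S\<close> \<open>u \<in> S\<close> by (intro Max_in) auto
  then obtain vs where "vs \<in> S" and "Max (f ` S) = f vs"
    by blast
  then have vs_max: "\<And>v. v \<in> S \<Longrightarrow> f v \<le> f vs"
    using \<open>finite S\<close> by (metis Max_ge finite_imageI imageI)
  have second_difference: "f vs + f (- vs) - 2 * \<phi> z \<le> \<epsilon>\<^sup>2 * lambda_max A"
  proof -
    have "f vs + f (- vs) - 2 * \<phi> z = \<epsilon>\<^sup>2 * (vs \<bullet> A vs)"
      using taylor_ray[of z \<epsilon> vs] taylor_ray[of z "- \<epsilon>" vs] by (simp add: f_def)
    also have "\<dots> \<le> \<epsilon>\<^sup>2 * lambda_max A"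
      using self_adjoint_quadratic_form_le_lambda_max[OF self_adjoint] \<open>vs \<in> S\<close> S_sphere
      by (intro mult_left_mono) auto
    finally show ?thesis .
  qed
  have "Max (\<phi> ` stencil \<epsilon> S z) \<le> max (\<phi> z) (f vs)"
    using \<open>finite S\<close> vs_max by (subst Max_le_iff) (auto simp: stencil_def f_def intro: max.coboundedI2)
  moreover have "Min (\<phi> ` stencil \<epsilon> S z) \<le> f (- vs)"
  proof -
    have "z + \<epsilon> *\<^sub>R (- vs) \<in> stencil \<epsilon> S z"
      unfolding stencil_def using S_sym[OF \<open>vs \<in> S\<close>] by blast
    then show ?thesis
      using \<open>finite S\<close> unfolding f_def by (intro Min_le) (auto simp: stencil_def)
  qed
  moreover have "f u \<le> f vs"
    using vs_max \<open>u \<in> S\<close> .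
  moreover have "0 \<le> onorm A * \<epsilon>\<^sup>2 * \<theta>\<^sup>2"
    using onorm_nonneg by simp
  ultimately show ?thesis
    using near_max second_difference by (simp add: max_def split: if_splits)
qed

lemma neg_disc_inf_lap_ge:
  assumes "is_mesh Th" and "finite S" and "stencil \<epsilon> S z \<subseteq> \<Union>Th" and "\<epsilon> \<noteq> 0"
  shows "\<epsilon>\<^sup>2 * neg_disc_inf_lap Th \<epsilon> S \<phi> z
    \<ge> 2 * \<phi> z - Max (\<phi> ` stencil \<epsilon> S z) - Min (\<phi> ` stencil \<epsilon> S z) - onorm A * (mesh_size Th)\<^sup>2"
proof -
  let ?N = "stencil \<epsilon> S z" and ?I = "lagrange_interp Th \<phi>" and ?\<delta> = "(1/2) * onorm A * (mesh_size Th)\<^sup>2"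
  have fin: "finite ?N" "?N \<noteq> {}"
    using assms(2) by (simp_all add: stencil_def)
  have close: "?I y \<le> \<phi> y + ?\<delta>" if "y \<in> ?N" for y
  proof -
    have "y \<in> \<Union>Th"
      using that assms(3) by blast
    from abs_le_D1[OF lagrange_interp_error[OF assms(1) this]] show ?thesis
      by simp
  qed
  have "Max (?I ` ?N) \<le> Max (\<phi> ` ?N) + ?\<delta>"
    using fin close by (rule Max_image_le_Max_plus)
  moreover have "Min (?I ` ?N) \<le> Min (\<phi> ` ?N) + ?\<delta>"
    using fin close by (rule Min_image_le_Min_plus)
  ultimately show ?thesis
    using assms(4) unfolding neg_disc_inf_lap_def by simp
qed

end

theorem lemma3p7:
  fixes A :: "'a::euclidean_space \<Rightarrow> 'a" and \<sigma> :: real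
  assumes "self_adjoint A"
  shows "\<exists>C::real. \<forall>(\<Omega>::'a set) Th \<epsilon> \<theta> S z (b::'a) (c::real) (\<phi>::'a \<Rightarrow> real).
     admissible_domain \<Omega> \<longrightarrow> is_mesh Th \<longrightarrow> shape_regular \<sigma> Th \<longrightarrow>
     inner_set \<Omega> (mesh_size Th) \<subseteq> mesh_domain Th \<longrightarrow> mesh_domain Th \<subseteq> \<Omega> \<longrightarrow>
     mesh_size Th \<le> \<epsilon> \<longrightarrow> \<epsilon> \<le> diameter \<Omega> \<longrightarrow> 0 < \<theta> \<longrightarrow> \<theta> \<le> 1 \<longrightarrow>
     direction_set \<theta> S \<longrightarrow>
     z \<in> mesh_nodes Th \<inter> inner_set \<Omega> (2 * \<epsilon>) \<longrightarrow>
     (\<forall>x. \<phi> x = c + b \<bullet> x + (1/2) * (x \<bullet> A x)) \<longrightarrow>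
     \<not> strict_local_max_in \<phi> (ball z \<epsilon>) \<longrightarrow>
     neg_disc_inf_lap Th \<epsilon> S \<phi> z \<ge>
       - lambda_max A - C * ((mesh_size Th)\<^sup>2 / \<epsilon>\<^sup>2 + \<theta>\<^sup>2)"
proof (intro exI[of _ "3/2 * onorm A"] allI impI)
  fix \<Omega> S :: "'a set" and Th :: "'a set set" and \<epsilon> \<theta> c :: real and z b :: 'a
    and \<phi> :: "'a \<Rightarrow> real"
  assume adm: "admissible_domain \<Omega>" and mesh: "is_mesh Th" and "shape_regular \<sigma> Th"
    and inner: "inner_set \<Omega> (mesh_size Th) \<subseteq> mesh_domain Th" and "mesh_domain Th \<subseteq> \<Omega>"
    and h_le: "mesh_size Th \<le> \<epsilon>" and "\<epsilon> \<le> diameter \<Omega>" and "0 < \<theta>" and "\<theta> \<le> 1"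
    and dirs: "direction_set \<theta> S" and z: "z \<in> mesh_nodes Th \<inter> inner_set \<Omega> (2 * \<epsilon>)"
    and \<phi>: "\<forall>x. \<phi> x = c + b \<bullet> x + (1/2) * (x \<bullet> A x)"
    and no_strict_max: "\<not> strict_local_max_in \<phi> (ball z \<epsilon>)"
  interpret quadratic_function A b c \<phi>
    using assms \<phi> by unfold_locales auto
  define h K where "h = mesh_size Th" and "K = onorm A"
  have "\<epsilon> > 0"
    using mesh_size_pos[OF mesh] h_le by simp
  have "finite S" and "S \<subseteq> sphere 0 1"
    using dirs unfolding direction_set_def by auto
  have "stencil \<epsilon> S z \<subseteq> cball z \<epsilon>"
    using \<open>\<epsilon> > 0\<close> \<open>S \<subseteq> sphere 0 1\<close> by (intro stencil_subset_cball) auto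
  also have "\<dots> \<subseteq> \<Union>Th"
    using adm z by (intro cball_subset_mesh[OF _ inner h_le]) (auto simp: admissible_domain_def)
  finally have "\<epsilon>\<^sup>2 * neg_disc_inf_lap Th \<epsilon> S \<phi> z
      \<ge> 2 * \<phi> z - Max (\<phi> ` stencil \<epsilon> S z) - Min (\<phi> ` stencil \<epsilon> S z) - K * h\<^sup>2"
    using neg_disc_inf_lap_ge[OF mesh \<open>finite S\<close>] \<open>\<epsilon> > 0\<close> by (simp add: K_def h_def)
  then have "\<epsilon>\<^sup>2 * neg_disc_inf_lap Th \<epsilon> S \<phi> z \<ge> - \<epsilon>\<^sup>2 * lambda_max A - 3/2 * K * \<epsilon>\<^sup>2 * \<theta>\<^sup>2 - K * h\<^sup>2"
    using stencil_second_difference_ge[OF \<open>\<epsilon> > 0\<close> \<open>\<theta> \<le> 1\<close> dirs no_strict_max]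
    unfolding K_def by linarith
  moreover have "\<epsilon>\<^sup>2 * (- lambda_max A - 3/2 * K * (h\<^sup>2 / \<epsilon>\<^sup>2 + \<theta>\<^sup>2))
      = - \<epsilon>\<^sup>2 * lambda_max A - 3/2 * K * \<epsilon>\<^sup>2 * \<theta>\<^sup>2 - 3/2 * K * h\<^sup>2"
    using \<open>\<epsilon> > 0\<close> by (simp add: field_simps)
  moreover have "0 \<le> K * h\<^sup>2"
    using onorm_nonneg by (simp add: K_def)
  ultimately have "\<epsilon>\<^sup>2 * (- lambda_max A - 3/2 * K * (h\<^sup>2 / \<epsilon>\<^sup>2 + \<theta>\<^sup>2)) \<le> \<epsilon>\<^sup>2 * neg_disc_inf_lap Th \<epsilon> S \<phi> z"
    by linarith
  then show "neg_disc_inf_lap Th \<epsilon> S \<phi> z \<ge> - lambda_max A - 3/2 * onorm A * (h\<^sup>2 / \<epsilon>\<^sup>2 + \<theta>\<^sup>2)"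
    unfolding K_def by (rule mult_left_le_imp_le) (use \<open>\<epsilon> > 0\<close> in simp)
qed

end
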